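(* Let $\alpha>0$. Every stochastically continuous $\alpha$-IDT process $(X_t;t\geq0)$ is temporally selfdecomposable of infinite order.
   Context: For $\alpha>0$, a stochastic process $X=(X_t;t\geq0)$ (real or $\mathbb{R}^d$-valued) is called an $\alpha$-IDT process if for every integer $n\geq1$, $(X_{n^{1/\alpha}t};t\geq0)\stackrel{(law)}{=}(X^{(1)}_t+\cdots+X^{(n)}_t;t\geq0)$, where $X^{(1)},\dots,X^{(n)}$ are independent copies of $X$; equality in law means equality of all finite-dimensional distributions. A process $X$ is temporally selfdecomposable if for every $c\in(0,1)$ there is a process $U^{(c)}=(U^{(c)}_t;t\ge0)$ (the $c$-residual), independent of an independent copy $X'$ of $X$, such that $(X_t;t\geq0)\stackrel{(law)}{=}(X'_{ct}+U^{(c)}_t;t\ge0)$. $X$ is temporally selfdecomposable of order $1$ if it is temporally selfdecomposable; of order $m+1$ if it is temporally selfdecomposable and, for every $c\in(0,1)$, its $c$-residual can be chosen temporally selfdecomposable of order $m$; and of infinite order if it is of order $m$ for every $m\ge1$. *)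

theory Defs
  imports "HOL-Probability.Probability"
begin

text \<open>Processes indexed by times t \<ge> 0, with values in a Euclidean space 'b
(covers real-valued and R^d-valued processes).\<close>

definition is_process :: "'a measure \<Rightarrow> (real \<Rightarrow> 'a \<Rightarrow> 'b::euclidean_space) \<Rightarrow> bool" where
  "is_process M X \<longleftrightarrow> (\<forall>t\<ge>0. X t \<in> borel_measurable M)"

definition paths :: "(real \<Rightarrow> 'b::euclidean_space) measure" where
  "paths = PiM {0..} (\<lambda>_. borel)"

definition fdd :: "'a measure \<Rightarrow> (real \<Rightarrow> 'a \<Rightarrow> 'b::euclidean_space) \<Rightarrow> real set
    \<Rightarrow> (real \<Rightarrow> 'b) measure" where
  "fdd M X I = distr M (PiM I (\<lambda>_. borel)) (\<lambda>\<omega>. \<lambda>t\<in>I. X t \<omega>)"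

definition eq_law :: "'a measure \<Rightarrow> (real \<Rightarrow> 'a \<Rightarrow> 'b::euclidean_space)
    \<Rightarrow> 'c measure \<Rightarrow> (real \<Rightarrow> 'c \<Rightarrow> 'b) \<Rightarrow> bool" where
  "eq_law M X N Y \<longleftrightarrow> (\<forall>I. finite I \<and> I \<subseteq> {0..} \<longrightarrow> fdd M X I = fdd N Y I)"

definition stoch_continuous :: "'a measure \<Rightarrow> (real \<Rightarrow> 'a \<Rightarrow> 'b::euclidean_space) \<Rightarrow> bool" where
  "stoch_continuous M X \<longleftrightarrow>
     (\<forall>t\<ge>0. \<forall>\<epsilon>>0. ((\<lambda>s. measure M {\<omega>\<in>space M. dist (X s \<omega>) (X t \<omega>) > \<epsilon>}) \<longlongrightarrow> 0)
        (at t within {0..}))"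

text \<open>The n independent copies are realised canonically as X(t, \<omega>_i) on the product
 space M^n (coordinates \<omega>_0, ..., \<omega>_{n-1}).\<close>
definition alpha_IDT :: "real \<Rightarrow> 'a measure \<Rightarrow> (real \<Rightarrow> 'a \<Rightarrow> 'b::euclidean_space) \<Rightarrow> bool" where
  "alpha_IDT \<alpha> M X \<longleftrightarrow>
     (\<forall>n::nat. n \<ge> 1 \<longrightarrow>
        eq_law M (\<lambda>t. X (real n powr (1/\<alpha>) * t))
               (PiM {..<n} (\<lambda>_. M)) (\<lambda>t \<omega>. \<Sum>i<n. X t (\<omega> i)))"

text \<open>Q is (the law on path space of) a c-residual of X: with X' an independent copy
 of X and U (coordinate process under Q) independent of X' (product space),
 X equals in law X'_{c t} + U_t.\<close>
definition TSD_residual :: "real \<Rightarrow> 'a measure \<Rightarrow> (real \<Rightarrow> 'a \<Rightarrow> 'b::euclidean_space)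
    \<Rightarrow> (real \<Rightarrow> 'b) measure \<Rightarrow> bool" where
  "TSD_residual c M X Q \<longleftrightarrow>
     prob_space Q \<and> sets Q = sets paths \<and>
     eq_law M X (M \<Otimes>\<^sub>M Q) (\<lambda>t (\<omega>, u). X (c * t) \<omega> + u t)"

fun tsd_paths :: "nat \<Rightarrow> (real \<Rightarrow> 'b::euclidean_space) measure \<Rightarrow> bool" where
  "tsd_paths 0 Q = True"
| "tsd_paths (Suc m) Q =
     (\<forall>c\<in>{0<..<1}. \<exists>R. TSD_residual c Q (\<lambda>t u. u t) R \<and> tsd_paths m R)"

definition TSD_order :: "nat \<Rightarrow> 'a measure \<Rightarrow> (real \<Rightarrow> 'a \<Rightarrow> 'b::euclidean_space) \<Rightarrow> bool" where
  "TSD_order m M X \<longleftrightarrow> m \<ge> 1 \<and>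
     (\<forall>c\<in>{0<..<1}. \<exists>Q. TSD_residual c M X Q \<and> tsd_paths (m - 1) Q)"

definition TSD_infinite_order :: "'a measure \<Rightarrow> (real \<Rightarrow> 'a \<Rightarrow> 'b::euclidean_space) \<Rightarrow> bool" where
  "TSD_infinite_order M X \<longleftrightarrow> (\<forall>m\<ge>1. TSD_order m M X)"

end

theory Submission
  imports Defs
begin

text \<open>If c^\<alpha> = m / (m + k) is rational, the \<alpha>-IDT property writes X as a time change of the
  sum of m + k independent copies of X; grouping the first m and the last k copies and applying
  the IDT property to each group gives X(t) = X'(c t) + X''(d t) in law, where X' and X'' are
  independent copies of X and d = (1 - c^\<alpha>)^(1/\<alpha>). Stochastic continuity extends this to every
  c in (0,1): approximating c^\<alpha> by such fractions, the right-hand sides converge in probability,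
  and equality of finite-dimensional laws survives limits in probability. The residual X''(d t) is
  again a stochastically continuous \<alpha>-IDT process, so the decomposition can be iterated to any
  depth.\<close>

section \<open>Finite-dimensional distributions\<close>

lemma measurable_restrict_process:
  assumes "is_process M X" "I \<subseteq> {0..}"
  shows "(\<lambda>\<omega>. \<lambda>t\<in>I. X t \<omega>) \<in> measurable M (PiM I (\<lambda>_. borel))"
  using assms unfolding is_process_def by (intro measurable_restrict) auto

lemma is_process_time_change:
  assumes "is_process M X" "\<And>t. t \<ge> 0 \<Longrightarrow> g t \<ge> 0"
  shows "is_process M (\<lambda>t. X (g t))"
  using assms unfolding is_process_def by auto

lemma is_process_independent_sum:
  assumes "is_process M1 A" "is_process M2 B"
  shows "is_process (M1 \<Otimes>\<^sub>M M2) (\<lambda>t (x, y). A t x + B t y)"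
  using assms unfolding is_process_def
  by (auto simp: case_prod_beta' intro!: borel_measurable_add
      measurable_compose[OF measurable_fst] measurable_compose[OF measurable_snd])

lemma is_process_iid_sum:
  assumes "is_process M X"
  shows "is_process (PiM {..<n} (\<lambda>_. M)) (\<lambda>t \<omega>. \<Sum>i<n. X t (\<omega> i))"
  using assms unfolding is_process_def
  by (auto intro!: borel_measurable_sum measurable_compose[OF measurable_component_singleton])

lemma prob_space_fdd:
  assumes "prob_space M" "is_process M X" "I \<subseteq> {0..}"
  shows "prob_space (fdd M X I)"
  unfolding fdd_def using assms by (intro prob_space.prob_space_distr measurable_restrict_process)

lemma sets_fdd [simp]: "sets (fdd M X I) = sets (PiM I (\<lambda>_. borel))"
  unfolding fdd_def by simp

lemma measure_fdd:
  assumes "is_process M X" "I \<subseteq> {0..}" "A \<in> sets (PiM I (\<lambda>_. borel))"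
  shows "measure (fdd M X I) A = measure M {\<omega>\<in>space M. (\<lambda>t\<in>I. X t \<omega>) \<in> A}"
  unfolding fdd_def using assms
  by (subst measure_distr[OF measurable_restrict_process]) (auto intro!: arg_cong[where f="measure M"])

lemma measure_fdd_box:
  assumes "is_process M X" "finite I" "I \<subseteq> {0..}" "\<And>i. i \<in> I \<Longrightarrow> G i \<in> sets borel"
  shows "measure (fdd M X I) (PiE I G) = measure M {\<omega>\<in>space M. \<forall>i\<in>I. X i \<omega> \<in> G i}"
  using assms by (subst measure_fdd) (auto intro!: sets_PiM_I_finite arg_cong[where f="measure M"])

lemma eq_law_refl: "eq_law M X M X"
  unfolding eq_law_def by simp

lemma eq_law_sym: "eq_law M X N Y \<Longrightarrow> eq_law N Y M X"
  unfolding eq_law_def by auto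

lemma eq_law_trans [trans]: "eq_law M X N Y \<Longrightarrow> eq_law N Y P Z \<Longrightarrow> eq_law M X P Z"
  unfolding eq_law_def by auto

lemma fdd_time_change:
  assumes X: "is_process M X" and g: "\<And>t. t \<ge> 0 \<Longrightarrow> g t \<ge> 0" and I: "I \<subseteq> {0..}"
  shows "fdd M (\<lambda>t. X (g t)) I =
    distr (fdd M X (g ` I)) (PiM I (\<lambda>_. borel)) (\<lambda>f. \<lambda>t\<in>I. f (g t))"
proof -
  have gI: "g ` I \<subseteq> {0..}" using g I by auto
  have "(\<lambda>f. \<lambda>t\<in>I. f (g t)) \<in> measurable (PiM (g ` I) (\<lambda>_. borel)) (PiM I (\<lambda>_. (borel::'b measure)))"
    by (intro measurable_restrict measurable_component_singleton) auto
  then show ?thesis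
    unfolding fdd_def
    by (subst distr_distr[OF _ measurable_restrict_process[OF X gI]])
       (auto intro!: distr_cong simp: restrict_def)
qed

lemma eq_law_time_change:
  assumes "is_process M X" "is_process N Y" "eq_law M X N Y" "\<And>t. t \<ge> 0 \<Longrightarrow> g t \<ge> 0"
  shows "eq_law M (\<lambda>t. X (g t)) N (\<lambda>t. Y (g t))"
  unfolding eq_law_def
proof safe
  fix I :: "real set" assume I: "finite I" "I \<subseteq> {0..}"
  moreover have "g ` I \<subseteq> {0..}" using assms(4) I by auto
  ultimately have "fdd M X (g ` I) = fdd N Y (g ` I)"
    using assms(3) unfolding eq_law_def by blast
  then show "fdd M (\<lambda>t. X (g t)) I = fdd N (\<lambda>t. Y (g t)) I"
    using assms I by (simp add: fdd_time_change)
qed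

lemma eq_law_measure_preserving:
  assumes phi: "phi \<in> measurable N N'" "distr N N' phi = N'" and Z': "is_process N' Z'"
    and eq: "\<And>t \<omega>. t \<ge> 0 \<Longrightarrow> \<omega> \<in> space N \<Longrightarrow> Z t \<omega> = Z' t (phi \<omega>)"
  shows "eq_law N Z N' Z'"
  unfolding eq_law_def
proof safe
  fix I :: "real set" assume I: "finite I" "I \<subseteq> {0..}"
  have "fdd N Z I = distr N (PiM I (\<lambda>_. borel)) ((\<lambda>\<omega>. \<lambda>t\<in>I. Z' t \<omega>) \<circ> phi)"
    unfolding fdd_def using I eq by (intro distr_cong) (auto simp: restrict_def fun_eq_iff)
  also have "\<dots> = distr (distr N N' phi) (PiM I (\<lambda>_. borel)) (\<lambda>\<omega>. \<lambda>t\<in>I. Z' t \<omega>)"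
    by (rule distr_distr[symmetric, OF measurable_restrict_process[OF Z' I(2)] phi(1)])
  finally show "fdd N Z I = fdd N' Z' I" unfolding fdd_def phi(2) .
qed

section \<open>Sums of independent processes\<close>

lemma fdd_independent_sum:
  fixes A :: "real \<Rightarrow> 'a \<Rightarrow> 'b::euclidean_space" and B :: "real \<Rightarrow> 'c \<Rightarrow> 'b"
  assumes M1: "prob_space M1" and M2: "prob_space M2"
    and A: "is_process M1 A" and B: "is_process M2 B" and I: "I \<subseteq> {0..}"
  shows "fdd (M1 \<Otimes>\<^sub>M M2) (\<lambda>t (x, y). A t x + B t y) I =
     distr (fdd M1 A I \<Otimes>\<^sub>M fdd M2 B I) (PiM I (\<lambda>_. borel)) (\<lambda>(f, g). \<lambda>t\<in>I. f t + g t)"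
proof -
  interpret pair_sigma_finite M1 M2
    using M1 M2 by (simp add: pair_sigma_finite_def prob_space_imp_sigma_finite)
  have add: "(\<lambda>(f, g). \<lambda>t\<in>I. f t + g t)
      \<in> measurable (PiM I (\<lambda>_. borel) \<Otimes>\<^sub>M PiM I (\<lambda>_. borel)) (PiM I (\<lambda>_. (borel::'b measure)))"
    unfolding case_prod_beta'
    by (intro measurable_restrict borel_measurable_add
        measurable_compose[OF measurable_fst measurable_component_singleton]
        measurable_compose[OF measurable_snd measurable_component_singleton])
  have pair: "(\<lambda>(x, y). (\<lambda>t\<in>I. A t x, \<lambda>t\<in>I. B t y))
      \<in> measurable (M1 \<Otimes>\<^sub>M M2) (PiM I (\<lambda>_. borel) \<Otimes>\<^sub>M PiM I (\<lambda>_. borel))"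
    using measurable_restrict_process[OF A I] measurable_restrict_process[OF B I]
    by (auto simp: case_prod_beta)
  have prod: "fdd M1 A I \<Otimes>\<^sub>M fdd M2 B I = distr (M1 \<Otimes>\<^sub>M M2) (PiM I (\<lambda>_. borel) \<Otimes>\<^sub>M PiM I (\<lambda>_. borel))
      (\<lambda>(x, y). (\<lambda>t\<in>I. A t x, \<lambda>t\<in>I. B t y))"
    unfolding fdd_def
    using prob_space_fdd[OF M2 B I] prob_space_imp_sigma_finite
    by (intro pair_measure_distr measurable_restrict_process A B I) (auto simp: fdd_def)
  show ?thesis
    unfolding prod distr_distr[OF add pair] unfolding fdd_def
    by (auto intro!: distr_cong simp: restrict_def)
qed

lemma eq_law_independent_sum:
  fixes A :: "real \<Rightarrow> 'a \<Rightarrow> 'b::euclidean_space" and B :: "real \<Rightarrow> 'c \<Rightarrow> 'b"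
    and A' :: "real \<Rightarrow> 'd \<Rightarrow> 'b" and B' :: "real \<Rightarrow> 'e \<Rightarrow> 'b"
  assumes "prob_space M1" "prob_space M2" "prob_space N1" "prob_space N2"
    and "is_process M1 A" "is_process M2 B" "is_process N1 A'" "is_process N2 B'"
    and "eq_law M1 A N1 A'" "eq_law M2 B N2 B'"
  shows "eq_law (M1 \<Otimes>\<^sub>M M2) (\<lambda>t (x, y). A t x + B t y) (N1 \<Otimes>\<^sub>M N2) (\<lambda>t (x, y). A' t x + B' t y)"
  using assms unfolding eq_law_def by (simp add: fdd_independent_sum)

lemma sum_lessThan_add_split:
  fixes m k :: nat
  shows "(\<Sum>i<m + k. f i) = (\<Sum>i<m. f i) + (\<Sum>j<k. f (j + m) :: 'a::comm_monoid_add)"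
  by (induction k) (simp_all add: add_ac)

lemma prod_lessThan_add_split:
  fixes m k :: nat
  shows "(\<Prod>i<m + k. f i) = (\<Prod>i<m. f i) * (\<Prod>j<k. f (j + m) :: 'a::comm_monoid_mult)"
  by (induction k) (simp_all add: mult_ac add.commute)

definition concat_coords :: "nat \<Rightarrow> nat \<Rightarrow> (nat \<Rightarrow> 'a) \<times> (nat \<Rightarrow> 'a) \<Rightarrow> nat \<Rightarrow> 'a" where
  "concat_coords m k = (\<lambda>(x, y). \<lambda>i\<in>{..<m + k}. if i < m then x i else y (i - m))"

lemma measurable_concat_coords:
  "concat_coords m k \<in> measurable (PiM {..<m} (\<lambda>_. M) \<Otimes>\<^sub>M PiM {..<k} (\<lambda>_. M)) (PiM {..<m + k} (\<lambda>_. M))"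
  unfolding concat_coords_def case_prod_beta'
proof (intro measurable_restrict)
  fix i assume "i \<in> {..<m + k}"
  then show "(\<lambda>p. if i < m then fst p i else snd p (i - m))
      \<in> measurable (PiM {..<m} (\<lambda>_. M) \<Otimes>\<^sub>M PiM {..<k} (\<lambda>_. M)) M"
    by (cases "i < m") (auto intro!: measurable_compose[OF measurable_fst measurable_component_singleton]
        measurable_compose[OF measurable_snd measurable_component_singleton])
qed

lemma distr_concat_coords:
  assumes M: "prob_space M"
  shows "distr (PiM {..<m} (\<lambda>_. M) \<Otimes>\<^sub>M PiM {..<k} (\<lambda>_. M)) (PiM {..<m + k} (\<lambda>_. M)) (concat_coords m k)
     = PiM {..<m + k} (\<lambda>_. M)"
proof -
  interpret product_prob_space "\<lambda>_::nat. M"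
    using M by (simp add: product_prob_space_def product_prob_space_axioms_def
        product_sigma_finite_def prob_space_imp_sigma_finite)
  show ?thesis
  proof (rule PiM_eqI)
    interpret Pk: prob_space "PiM {..<k} (\<lambda>_. M)" by (rule prob_space_PiM) (use M in auto)
    fix A assume A: "\<And>i. i \<in> {..<m + k} \<Longrightarrow> A i \<in> sets M"
    have s1: "Pi\<^sub>E {..<m} A \<in> sets (PiM {..<m} (\<lambda>_. M))"
      and s2: "Pi\<^sub>E {..<k} (\<lambda>j. A (j + m)) \<in> sets (PiM {..<k} (\<lambda>_. M))"
      using A by (auto intro!: sets_PiM_I_finite)
    have PiE_measure: "emeasure (PiM {..<m} (\<lambda>_. M)) (Pi\<^sub>E {..<m} A) = (\<Prod>i<m. emeasure M (A i))"
      "emeasure (PiM {..<k} (\<lambda>_. M)) (Pi\<^sub>E {..<k} (\<lambda>j. A (j + m))) = (\<Prod>j<k. emeasure M (A (j + m)))"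
      using A by (auto intro!: emeasure_PiM)
    have "concat_coords m k -` Pi\<^sub>E {..<m + k} A \<inter> space (PiM {..<m} (\<lambda>_. M) \<Otimes>\<^sub>M PiM {..<k} (\<lambda>_. M))
        = Pi\<^sub>E {..<m} A \<times> Pi\<^sub>E {..<k} (\<lambda>j. A (j + m))"
      using A[THEN sets.sets_into_space]
      apply (auto simp: concat_coords_def space_pair_measure space_PiM PiE_iff split: if_splits)
      subgoal for a b i by (drule bspec[of _ _ "i + m"]) auto
      subgoal for a b i by (drule bspec[of _ _ "i - m"]) auto
      subgoal for a b i by (metis lessThan_iff subsetD trans_less_add1)
      subgoal for a b i by (metis add.commute add_less_cancel_left lessThan_iff subsetD)
      done
    moreover have "emeasure (PiM {..<m} (\<lambda>_. M) \<Otimes>\<^sub>M PiM {..<k} (\<lambda>_. M))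
        (Pi\<^sub>E {..<m} A \<times> Pi\<^sub>E {..<k} (\<lambda>j. A (j + m)))
        = (\<Prod>i<m. emeasure M (A i)) * (\<Prod>j<k. emeasure M (A (j + m)))"
      by (simp add: Pk.emeasure_pair_measure_Times[OF s1 s2] PiE_measure)
    ultimately show "emeasure (distr (PiM {..<m} (\<lambda>_. M) \<Otimes>\<^sub>M PiM {..<k} (\<lambda>_. M)) (PiM {..<m + k} (\<lambda>_. M))
        (concat_coords m k)) (Pi\<^sub>E {..<m + k} A) = (\<Prod>i<m + k. emeasure M (A i))"
      using A by (simp add: emeasure_distr[OF measurable_concat_coords] sets_PiM_I_finite
          prod_lessThan_add_split)
  qed simp_all
qed

lemma eq_law_iid_sum_split:
  fixes m k :: nat
  assumes M: "prob_space M" and X: "is_process M X"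
  shows "eq_law (PiM {..<m} (\<lambda>_. M) \<Otimes>\<^sub>M PiM {..<k} (\<lambda>_. M))
     (\<lambda>t (x, y). (\<Sum>i<m. X t (x i)) + (\<Sum>i<k. X t (y i)))
     (PiM {..<m + k} (\<lambda>_. M)) (\<lambda>t \<omega>. \<Sum>i<m + k. X t (\<omega> i))"
  by (rule eq_law_measure_preserving[OF measurable_concat_coords distr_concat_coords[OF M] is_process_iid_sum[OF X]])
     (auto simp: sum_lessThan_add_split concat_coords_def)

lemma eq_law_iid_sum_one:
  assumes "prob_space M" "is_process M X"
  shows "eq_law (PiM {..<Suc 0} (\<lambda>_. M)) (\<lambda>t \<omega>. \<Sum>i<Suc 0. X t (\<omega> i)) M X"
proof (rule eq_law_measure_preserving[where phi="\<lambda>\<omega>. \<omega> 0"])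
  show "distr (PiM {..<Suc 0} (\<lambda>_. M)) M (\<lambda>\<omega>. \<omega> 0) = M"
    using distr_PiM_component[of "{..<Suc 0}" "\<lambda>_. M" 0] assms by simp
qed (use assms in auto)

lemma eq_law_iid_sum:
  fixes X :: "real \<Rightarrow> 'a \<Rightarrow> 'b::euclidean_space" and Y :: "real \<Rightarrow> 'c \<Rightarrow> 'b" and n :: nat
  assumes M: "prob_space M" and N: "prob_space N" and X: "is_process M X" and Y: "is_process N Y"
    and law: "eq_law M X N Y" and n: "n \<ge> 1"
  shows "eq_law (PiM {..<n} (\<lambda>_. M)) (\<lambda>t \<omega>. \<Sum>i<n. X t (\<omega> i))
                (PiM {..<n} (\<lambda>_. N)) (\<lambda>t \<omega>. \<Sum>i<n. Y t (\<omega> i))"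
proof -
  have one: "eq_law (PiM {..<Suc 0} (\<lambda>_. M)) (\<lambda>t \<omega>. \<Sum>i<Suc 0. X t (\<omega> i))
                   (PiM {..<Suc 0} (\<lambda>_. N)) (\<lambda>t \<omega>. \<Sum>i<Suc 0. Y t (\<omega> i))"
    using eq_law_trans[OF eq_law_iid_sum_one[OF M X] eq_law_trans[OF law eq_law_sym[OF eq_law_iid_sum_one[OF N Y]]]] .
  show ?thesis
    using n
  proof (induction n rule: dec_induct)
    case base
    show ?case using one by simp
  next
    case (step n)
    have PM: "prob_space (PiM {..<j} (\<lambda>_. M))" and PN: "prob_space (PiM {..<j} (\<lambda>_. N))" for j
      using M N by (auto intro: prob_space_PiM)
    have "eq_law (PiM {..<n} (\<lambda>_. M) \<Otimes>\<^sub>M PiM {..<Suc 0} (\<lambda>_. M))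
        (\<lambda>t (x, y). (\<Sum>i<n. X t (x i)) + (\<Sum>i<Suc 0. X t (y i)))
        (PiM {..<n} (\<lambda>_. N) \<Otimes>\<^sub>M PiM {..<Suc 0} (\<lambda>_. N))
        (\<lambda>t (x, y). (\<Sum>i<n. Y t (x i)) + (\<Sum>i<Suc 0. Y t (y i)))"
      by (rule eq_law_independent_sum[OF PM PM PN PN is_process_iid_sum[OF X] is_process_iid_sum[OF X]
            is_process_iid_sum[OF Y] is_process_iid_sum[OF Y] step.IH one])
    then show ?case
      using eq_law_trans[OF eq_law_trans[OF eq_law_sym[OF eq_law_iid_sum_split[OF M X, of n "Suc 0"]]]
          eq_law_iid_sum_split[OF N Y, of n "Suc 0"]]
      by simp
  qed
qed

section \<open>Limits in probability preserve the law\<close>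

lemma measure_eqI_PiM_closed_boxes:
  fixes P Q :: "('i \<Rightarrow> 'b::topological_space) measure"
  assumes I: "finite I" and sP: "sets P = sets (PiM I (\<lambda>_. borel))" and sQ: "sets Q = sets (PiM I (\<lambda>_. borel))"
    and P: "finite_measure P"
    and eq: "\<And>F. (\<forall>i\<in>I. closed (F i)) \<Longrightarrow> emeasure P (PiE I F) = emeasure Q (PiE I F)"
  shows "P = Q"
proof -
  define \<Omega> where "\<Omega> = PiE I (\<lambda>_. UNIV :: 'b set)"
  define G where "G = {{f\<in>\<Omega>. \<forall>i\<in>j. f i \<in> A i} | A j. j \<in> {I} \<and> A \<in> Pi j (\<lambda>_. Collect closed)}"
  have G_eq: "G = {PiE I A | A. \<forall>i\<in>I. closed (A i)}"
  proof -
    have "{f\<in>\<Omega>. \<forall>i\<in>I. f i \<in> A i} = PiE I A" for A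
      unfolding \<Omega>_def by (auto simp: PiE_iff extensional_def)
    then show ?thesis unfolding G_def by (auto simp: Pi_iff)
  qed
  have G_space: "G \<subseteq> Pow \<Omega>" unfolding G_eq \<Omega>_def by (auto simp: PiE_iff)
  have "sets (PiM I (\<lambda>_. sigma (UNIV::'b set) (Collect closed))) = sets (sigma \<Omega> G)"
    unfolding \<Omega>_def G_def by (rule sets_PiM_sigma) (auto intro!: exI[of _ "{UNIV}"] simp: I)
  then have sets_eq: "sets (PiM I (\<lambda>_. borel :: 'b measure)) = sigma_sets \<Omega> G"
    using G_space by (simp add: borel_eq_closed)
  have "Int_stable G"
    unfolding G_eq Int_stable_def
  proof safe
    fix A B :: "'i \<Rightarrow> 'b set" assume "\<forall>i\<in>I. closed (A i)" "\<forall>i\<in>I. closed (B i)"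
    then show "\<exists>C. PiE I A \<inter> PiE I B = PiE I C \<and> (\<forall>i\<in>I. closed (C i))"
      by (intro exI[of _ "\<lambda>i. A i \<inter> B i"]) (auto simp: PiE_Int)
  qed
  then show ?thesis
  proof (rule measure_eqI_generator_eq[OF _ G_space])
    show "sets P = sigma_sets \<Omega> G" "sets Q = sigma_sets \<Omega> G" using sP sQ sets_eq by simp_all
    show "range (\<lambda>_::nat. \<Omega>) \<subseteq> G" unfolding G_eq \<Omega>_def by auto
    show "emeasure P \<Omega> \<noteq> \<infinity>" using finite_measure.emeasure_finite[OF P] by simp
  qed (auto simp: G_eq eq)
qed

lemma closed_infdist_le: "closed {x. infdist x F \<le> e}"
  by (intro closed_Collect_le continuous_on_infdist continuous_on_id continuous_on_const)

lemma tendsto_measure_thickened_box: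
  fixes R :: "('i \<Rightarrow> 'b::metric_space) measure"
  assumes R: "finite_measure R" "sets R = sets (PiM I (\<lambda>_. borel))" and I: "finite I"
    and F: "\<And>i. i \<in> I \<Longrightarrow> closed (F i)" "\<And>i. i \<in> I \<Longrightarrow> F i \<noteq> {}"
  shows "(\<lambda>j. measure R (PiE I (\<lambda>i. {x. infdist x (F i) \<le> 1 / Suc j}))) \<longlonglongrightarrow> measure R (PiE I F)"
proof -
  interpret finite_measure R by fact
  define C where "C j = PiE I (\<lambda>i. {x. infdist x (F i) \<le> 1 / Suc j})" for j :: nat
  have "(\<lambda>j. measure R (C j)) \<longlonglongrightarrow> measure R (\<Inter>j. C j)"
  proof (rule finite_Lim_measure_decseq)
    show "range C \<subseteq> sets R" unfolding C_def R(2) using I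
      by (auto intro!: sets_PiM_I_finite borel_closed closed_infdist_le)
    show "decseq C" unfolding decseq_def C_def
    proof (intro allI impI subsetI)
      fix m n :: nat and x assume "m \<le> n" and x: "x \<in> PiE I (\<lambda>i. {x. infdist x (F i) \<le> 1 / Suc n})"
      then have "1 / real (Suc n) \<le> 1 / real (Suc m)" by (simp add: frac_le)
      then show "x \<in> PiE I (\<lambda>i. {x. infdist x (F i) \<le> 1 / Suc m})" using x by (auto simp: PiE_iff)
    qed
  qed
  moreover have "(\<Inter>j. C j) = PiE I F"
  proof (intro set_eqI iffI)
    fix x assume x: "x \<in> (\<Inter>j. C j)"
    have "infdist (x i) (F i) = 0" if i: "i \<in> I" for i
    proof (rule antisym[OF field_le_epsilon infdist_nonneg])
      fix e :: real assume "e > 0"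
      then obtain j :: nat where "1 / Suc j < e" by (metis nat_approx_posE)
      moreover have "infdist (x i) (F i) \<le> 1 / Suc j" using x i unfolding C_def by (auto simp: PiE_iff)
      ultimately show "infdist (x i) (F i) \<le> 0 + e" by simp
    qed
    then show "x \<in> PiE I F"
      using x in_closed_iff_infdist_zero[OF F(1) F(2)] unfolding C_def by (auto simp: PiE_iff)
  qed (auto simp: C_def PiE_iff in_closed_iff_infdist_zero[OF F])
  ultimately show ?thesis unfolding C_def by simp
qed

lemma measure_box_le_thickened_box:
  fixes A B :: "'i \<Rightarrow> 'a \<Rightarrow> 'b::euclidean_space"
  assumes N: "prob_space N" and I: "finite I"
    and meas: "\<And>i. i \<in> I \<Longrightarrow> A i \<in> borel_measurable N" "\<And>i. i \<in> I \<Longrightarrow> B i \<in> borel_measurable N"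
  shows "measure N {\<omega>\<in>space N. \<forall>i\<in>I. A i \<omega> \<in> F i} \<le>
     measure N {\<omega>\<in>space N. \<forall>i\<in>I. B i \<omega> \<in> {x. infdist x (F i) \<le> e}}
     + (\<Sum>i\<in>I. measure N {\<omega>\<in>space N. dist (A i \<omega>) (B i \<omega>) > e})"
proof -
  interpret prob_space N by fact
  define S where "S = {\<omega>\<in>space N. \<forall>i\<in>I. B i \<omega> \<in> {x. infdist x (F i) \<le> e}}"
  define D where "D i = {\<omega>\<in>space N. dist (A i \<omega>) (B i \<omega>) > e}" for i
  have S_sets: "S \<in> sets N" unfolding S_def
  proof (intro sets.sets_Collect_finite_All I)
    fix i assume "i \<in> I"
    then have "B i -` {x. infdist x (F i) \<le> e} \<inter> space N \<in> sets N"
      using meas by (intro measurable_sets[of "B i" N borel] borel_closed closed_infdist_le) auto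
    moreover have "B i -` {x. infdist x (F i) \<le> e} \<inter> space N
        = {\<omega>\<in>space N. B i \<omega> \<in> {x. infdist x (F i) \<le> e}}" by auto
    ultimately show "{\<omega>\<in>space N. B i \<omega> \<in> {x. infdist x (F i) \<le> e}} \<in> sets N" by simp
  qed
  have D_sets: "D i \<in> sets N" if "i \<in> I" for i
    unfolding D_def using meas(1)[OF that] meas(2)[OF that] by measurable
  have "{\<omega>\<in>space N. \<forall>i\<in>I. A i \<omega> \<in> F i} \<subseteq> S \<union> (\<Union>i\<in>I. D i)"
  proof
    fix \<omega> assume \<omega>: "\<omega> \<in> {\<omega>\<in>space N. \<forall>i\<in>I. A i \<omega> \<in> F i}"
    show "\<omega> \<in> S \<union> (\<Union>i\<in>I. D i)"
    proof (cases "\<exists>i\<in>I. dist (A i \<omega>) (B i \<omega>) > e")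
      case False
      then have "infdist (B i \<omega>) (F i) \<le> e" if "i \<in> I" for i
        using \<omega> that infdist_le[of "A i \<omega>" "F i" "B i \<omega>"] by (auto simp: dist_commute)
      then show ?thesis using \<omega> unfolding S_def by auto
    qed (use \<omega> in \<open>auto simp: D_def\<close>)
  qed
  then have "measure N {\<omega>\<in>space N. \<forall>i\<in>I. A i \<omega> \<in> F i} \<le> measure N (S \<union> (\<Union>i\<in>I. D i))"
    using S_sets D_sets I by (intro finite_measure_mono) auto
  also have "\<dots> \<le> measure N S + measure N (\<Union>i\<in>I. D i)"
    using S_sets D_sets I by (intro measure_Un_le) auto
  also have "measure N (\<Union>i\<in>I. D i) \<le> (\<Sum>i\<in>I. measure N (D i))"
    using D_sets I by (intro finite_measure_subadditive_finite) auto
  finally show ?thesis unfolding S_def D_def by simp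
qed

lemma measure_fdd_box_le_thickened:
  fixes A B :: "real \<Rightarrow> 'a \<Rightarrow> 'b::euclidean_space"
  assumes N: "prob_space N" and A: "is_process N A" and B: "is_process N B"
    and I: "finite I" "I \<subseteq> {0..}" and F: "\<And>i. i \<in> I \<Longrightarrow> closed (F i)"
  shows "measure (fdd N A I) (PiE I F) \<le>
     measure (fdd N B I) (PiE I (\<lambda>i. {x. infdist x (F i) \<le> e}))
     + (\<Sum>i\<in>I. measure N {\<omega>\<in>space N. dist (A i \<omega>) (B i \<omega>) > e})"
proof -
  have "A i \<in> borel_measurable N" "B i \<in> borel_measurable N" if "i \<in> I" for i
    using A B that I unfolding is_process_def by auto
  then show ?thesis
    using measure_box_le_thickened_box[OF N I(1), of A B F e] F
    by (simp add: measure_fdd_box[OF A I] measure_fdd_box[OF B I] borel_closed closed_infdist_le)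
qed

lemma le_of_tendsto_zero_add:
  fixes a b :: real
  assumes "\<And>k. a \<le> b + s k" "s \<longlonglongrightarrow> 0"
  shows "a \<le> b"
  using LIMSEQ_le_const[OF tendsto_add[OF tendsto_const assms(2)], of a b] assms(1) by simp

lemma measure_fdd_box_le_of_tendsto_in_probability:
  fixes A B :: "nat \<Rightarrow> real \<Rightarrow> 'a \<Rightarrow> 'b::euclidean_space"
  assumes N: "prob_space N" and A: "\<And>k. is_process N (A k)" and B: "\<And>k. is_process N (B k)"
    and A_law: "\<And>k. fdd N (A k) I = \<mu>" and B_law: "\<And>k. fdd N (B k) I = \<nu>"
    and I: "finite I" "I \<subseteq> {0..}"
    and F: "\<And>i. i \<in> I \<Longrightarrow> closed (F i)" "\<And>i. i \<in> I \<Longrightarrow> F i \<noteq> {}"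
    and conv: "\<And>e. e > 0 \<Longrightarrow>
      (\<lambda>k. \<Sum>i\<in>I. measure N {\<omega>\<in>space N. dist (A k i \<omega>) (B k i \<omega>) > e}) \<longlonglongrightarrow> 0"
  shows "measure \<mu> (PiE I F) \<le> measure \<nu> (PiE I F)"
proof (rule LIMSEQ_le_const[OF tendsto_measure_thickened_box])
  show "finite_measure \<nu>"
    using prob_space_fdd[OF N B[of 0] I(2)] unfolding B_law by (simp add: prob_space_def)
  show "sets \<nu> = sets (PiM I (\<lambda>_. borel))"
    using sets_fdd[of N "B 0" I] unfolding B_law .
  have "measure \<mu> (PiE I F) \<le> measure \<nu> (PiE I (\<lambda>i. {x. infdist x (F i) \<le> 1 / Suc j}))" for j
  proof (rule le_of_tendsto_zero_add[OF _ conv])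
    show "measure \<mu> (PiE I F) \<le> measure \<nu> (PiE I (\<lambda>i. {x. infdist x (F i) \<le> 1 / Suc j}))
        + (\<Sum>i\<in>I. measure N {\<omega>\<in>space N. dist (A k i \<omega>) (B k i \<omega>) > 1 / Suc j})" for k
      using measure_fdd_box_le_thickened[OF N A[of k] B[of k] I F(1)] unfolding A_law B_law .
  qed simp
  then show "\<exists>N. \<forall>j\<ge>N. measure \<mu> (PiE I F) \<le> measure \<nu> (PiE I (\<lambda>i. {x. infdist x (F i) \<le> 1 / Suc j}))"
    by blast
qed (use I F in auto)

lemma eq_law_tendsto_in_probability:
  fixes X :: "real \<Rightarrow> 'a \<Rightarrow> 'b::euclidean_space" and Z :: "real \<Rightarrow> 'c \<Rightarrow> 'b"
    and Zs :: "nat \<Rightarrow> real \<Rightarrow> 'c \<Rightarrow> 'b"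
  assumes N: "prob_space N" and Z: "is_process N Z" and Zs: "\<And>k. is_process N (Zs k)"
    and law: "\<And>k. eq_law M X N (Zs k)"
    and conv: "\<And>t e. t \<ge> 0 \<Longrightarrow> e > 0 \<Longrightarrow>
        (\<lambda>k. measure N {\<omega>\<in>space N. dist (Zs k t \<omega>) (Z t \<omega>) > e}) \<longlonglongrightarrow> 0"
  shows "eq_law M X N Z"
  unfolding eq_law_def
proof safe
  fix I :: "real set" assume I: "finite I" "I \<subseteq> {0..}"
  define \<mu> where "\<mu> = fdd N (Zs 0) I"
  define \<nu> where "\<nu> = fdd N Z I"
  have \<mu>_eq: "fdd M X I = \<mu>" "fdd N (Zs k) I = \<mu>" for k
    using law[of 0] law[of k] I unfolding eq_law_def \<mu>_def by simp_all
  have \<mu>: "finite_measure \<mu>" and \<nu>: "finite_measure \<nu>"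
    unfolding \<mu>_def \<nu>_def using prob_space_fdd N Zs Z I by (auto simp: prob_space_def)
  have sum_conv: "(\<lambda>k. \<Sum>i\<in>I. measure N {\<omega>\<in>space N. dist (Zs k i \<omega>) (Z i \<omega>) > e}) \<longlonglongrightarrow> 0"
    if "e > 0" for e
    using I that by (intro tendsto_null_sum conv) auto
  then have sum_conv': "(\<lambda>k. \<Sum>i\<in>I. measure N {\<omega>\<in>space N. dist (Z i \<omega>) (Zs k i \<omega>) > e}) \<longlonglongrightarrow> 0"
    if "e > 0" for e
    using that by (simp add: dist_commute)
  have "\<mu> = \<nu>"
  proof (rule measure_eqI_PiM_closed_boxes[OF I(1) _ _ \<mu>])
    fix F :: "real \<Rightarrow> 'b set" assume F: "\<forall>i\<in>I. closed (F i)"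
    show "emeasure \<mu> (PiE I F) = emeasure \<nu> (PiE I F)"
    proof (cases "\<exists>i\<in>I. F i = {}")
      case True
      then have "PiE I F = {}" by (auto simp: PiE_eq_empty_iff)
      then show ?thesis by simp
    next
      case False
      then have F': "\<And>i. i \<in> I \<Longrightarrow> closed (F i)" "\<And>i. i \<in> I \<Longrightarrow> F i \<noteq> {}" using F by auto
      have "measure \<mu> (PiE I F) \<le> measure \<nu> (PiE I F)"
        by (rule measure_fdd_box_le_of_tendsto_in_probability[where B="\<lambda>_. Z",
              OF N Zs Z \<mu>_eq(2) \<nu>_def[symmetric] I F' sum_conv])
      moreover have "measure \<nu> (PiE I F) \<le> measure \<mu> (PiE I F)"
        by (rule measure_fdd_box_le_of_tendsto_in_probability[where A="\<lambda>_. Z",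
              OF N Z Zs \<nu>_def[symmetric] \<mu>_eq(2) I F' sum_conv'])
      ultimately show ?thesis
        using \<mu> \<nu> by (simp add: finite_measure.emeasure_eq_measure)
    qed
  qed (simp_all add: \<mu>_def \<nu>_def)
  then show "fdd M X I = fdd N Z I" unfolding \<mu>_eq \<nu>_def .
qed

section \<open>Stochastic continuity\<close>

lemma stoch_continuous_tendsto_seq:
  assumes sc: "stoch_continuous M X" and u: "u \<ge> 0" and e: "e > 0"
    and x: "x \<longlonglongrightarrow> u" "\<And>n. x n \<ge> 0"
  shows "(\<lambda>n. measure M {\<omega>\<in>space M. dist (X (x n) \<omega>) (X u \<omega>) > e}) \<longlonglongrightarrow> 0"
proof -
  define f where "f s = measure M {\<omega>\<in>space M. dist (X s \<omega>) (X u \<omega>) > e}" for s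
  have "f u = 0" unfolding f_def using e by simp
  moreover have "(f \<longlongrightarrow> 0) (at u within {0..})"
    unfolding f_def using sc u e unfolding stoch_continuous_def by auto
  ultimately have "continuous (at u within {0..}) f" by (simp add: continuous_within)
  then have "(f \<circ> x) \<longlonglongrightarrow> f u" using x unfolding continuous_within_sequentially by auto
  then show ?thesis using \<open>f u = 0\<close> by (simp add: f_def o_def)
qed

lemma stoch_continuous_time_scale:
  assumes sc: "stoch_continuous M X" and d: "d \<ge> 0"
  shows "stoch_continuous M (\<lambda>t. X (d * t))"
  unfolding stoch_continuous_def
proof safe
  fix t e :: real assume t: "t \<ge> 0" and e: "e > 0"
  define h where "h r = measure M {\<omega>\<in>space M. dist (X r \<omega>) (X (d * t) \<omega>) > e}" for r
  have h0: "h (d * t) = 0" unfolding h_def using e by simp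
  have "(h \<longlongrightarrow> 0) (at (d * t) within {0..})"
    unfolding h_def using sc t d e unfolding stoch_continuous_def by auto
  then have h: "continuous (at (d * t) within {0..}) h" unfolding continuous_within h0 .
  have scale: "continuous (at t within {0..}) (\<lambda>s. d * s)" by (intro continuous_intros)
  have "continuous (at t within {0..}) (h \<circ> (\<lambda>s. d * s))"
    by (rule continuous_within_compose[OF scale continuous_within_subset[OF h]]) (use d in auto)
  then show "((\<lambda>s. measure M {\<omega>\<in>space M. dist (X (d * s) \<omega>) (X (d * t) \<omega>) > e}) \<longlongrightarrow> 0)
      (at t within {0..})"
    unfolding continuous_within o_def h0 by (simp add: h_def)
qed

lemma measure_dist_gt_eq_fdd:
  fixes X :: "real \<Rightarrow> 'a \<Rightarrow> 'b::euclidean_space"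
  assumes X: "is_process M X" and st: "s \<ge> 0" "t \<ge> 0"
  shows "measure M {\<omega>\<in>space M. dist (X s \<omega>) (X t \<omega>) > e}
    = measure (fdd M X {s, t}) {f\<in>space (PiM {s, t} (\<lambda>_. borel)). dist (f s) (f t) > e}"
proof -
  have [measurable]: "(\<lambda>f. dist (f s) (f t)) \<in> borel_measurable (PiM {s, t} (\<lambda>_. (borel::'b measure)))"
    by (intro borel_measurable_dist measurable_component_singleton) auto
  have "{f\<in>space (PiM {s, t} (\<lambda>_. borel)). dist (f s) (f t) > e} \<in> sets (PiM {s, t} (\<lambda>_. (borel::'b measure)))"
    by measurable
  moreover have "{\<omega>\<in>space M. (\<lambda>r\<in>{s, t}. X r \<omega>) \<in> {f\<in>space (PiM {s, t} (\<lambda>_. borel)). dist (f s) (f t) > e}}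
      = {\<omega>\<in>space M. dist (X s \<omega>) (X t \<omega>) > e}"
    by (auto simp: space_PiM)
  ultimately show ?thesis
    using X st by (simp add: measure_fdd)
qed

lemma stoch_continuous_eq_law:
  assumes X: "is_process M X" and Y: "is_process N Y" and law: "eq_law M X N Y"
    and sc: "stoch_continuous M X"
  shows "stoch_continuous N Y"
  unfolding stoch_continuous_def
proof safe
  fix t e :: real assume t: "t \<ge> 0" and e: "e > 0"
  have "measure M {\<omega>\<in>space M. dist (X s \<omega>) (X t \<omega>) > e}
      = measure N {\<omega>\<in>space N. dist (Y s \<omega>) (Y t \<omega>) > e}" if "s \<ge> 0" for s
  proof -
    have "fdd M X {s, t} = fdd N Y {s, t}" using law t that unfolding eq_law_def by simp
    then show ?thesis using t that by (simp add: measure_dist_gt_eq_fdd[OF X] measure_dist_gt_eq_fdd[OF Y])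
  qed
  then have "\<forall>\<^sub>F s in at t within {0..}. measure M {\<omega>\<in>space M. dist (X s \<omega>) (X t \<omega>) > e}
      = measure N {\<omega>\<in>space N. dist (Y s \<omega>) (Y t \<omega>) > e}"
    unfolding eventually_at_filter by (auto intro: always_eventually)
  moreover have "((\<lambda>s. measure M {\<omega>\<in>space M. dist (X s \<omega>) (X t \<omega>) > e}) \<longlongrightarrow> 0) (at t within {0..})"
    using sc t e unfolding stoch_continuous_def by simp
  ultimately show "((\<lambda>s. measure N {\<omega>\<in>space N. dist (Y s \<omega>) (Y t \<omega>) > e}) \<longlongrightarrow> 0) (at t within {0..})"
    by (rule Lim_transform_eventually[rotated])
qed

lemma measure_pair_measure_Times:
  assumes "prob_space M1" "prob_space M2" "A \<in> sets M1" "B \<in> sets M2"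
  shows "measure (M1 \<Otimes>\<^sub>M M2) (A \<times> B) = measure M1 A * measure M2 B"
  using assms prob_space_imp_sigma_finite[of M2]
  by (simp add: measure_def sigma_finite_measure.emeasure_pair_measure_Times enn2real_mult)

lemma measure_dist_independent_sum_le:
  fixes A A' :: "'a \<Rightarrow> 'b::{real_normed_vector, second_countable_topology}" and B B' :: "'c \<Rightarrow> 'b"
  assumes M1: "prob_space M1" and M2: "prob_space M2"
    and meas: "A \<in> borel_measurable M1" "A' \<in> borel_measurable M1"
      "B \<in> borel_measurable M2" "B' \<in> borel_measurable M2"
  shows "measure (M1 \<Otimes>\<^sub>M M2)
      {p\<in>space (M1 \<Otimes>\<^sub>M M2). dist (A (fst p) + B (snd p)) (A' (fst p) + B' (snd p)) > e}
    \<le> measure M1 {x\<in>space M1. dist (A x) (A' x) > e / 2} + measure M2 {y\<in>space M2. dist (B y) (B' y) > e / 2}"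
proof -
  interpret P: prob_space "M1 \<Otimes>\<^sub>M M2" by (rule prob_space_pair[OF M1 M2])
  define SA where "SA = {x\<in>space M1. dist (A x) (A' x) > e / 2}"
  define SB where "SB = {y\<in>space M2. dist (B y) (B' y) > e / 2}"
  have SA: "SA \<in> sets M1" unfolding SA_def using meas by measurable
  have SB: "SB \<in> sets M2" unfolding SB_def using meas by measurable
  have "{p\<in>space (M1 \<Otimes>\<^sub>M M2). dist (A (fst p) + B (snd p)) (A' (fst p) + B' (snd p)) > e}
      \<subseteq> (SA \<times> space M2) \<union> (space M1 \<times> SB)"
  proof
    fix p assume "p \<in> {p\<in>space (M1 \<Otimes>\<^sub>M M2). dist (A (fst p) + B (snd p)) (A' (fst p) + B' (snd p)) > e}"
    then obtain x y where p: "p = (x, y)" "x \<in> space M1" "y \<in> space M2"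
      and far: "e < dist (A x + B y) (A' x + B' y)"
      by (cases p) (auto simp: space_pair_measure)
    have "dist (A x + B y) (A' x + B' y) \<le> dist (A x) (A' x) + dist (B y) (B' y)"
      by (rule dist_triangle_add)
    then show "p \<in> (SA \<times> space M2) \<union> (space M1 \<times> SB)"
      using p far unfolding SA_def SB_def by auto
  qed
  then have "measure (M1 \<Otimes>\<^sub>M M2)
      {p\<in>space (M1 \<Otimes>\<^sub>M M2). dist (A (fst p) + B (snd p)) (A' (fst p) + B' (snd p)) > e}
      \<le> measure (M1 \<Otimes>\<^sub>M M2) (SA \<times> space M2) + measure (M1 \<Otimes>\<^sub>M M2) (space M1 \<times> SB)"
    using SA SB by (intro order_trans[OF P.finite_measure_mono measure_Un_le]) auto
  also have "\<dots> = measure M1 SA + measure M2 SB"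
    using SA SB M1 M2 by (simp add: measure_pair_measure_Times prob_space.prob_space)
  finally show ?thesis unfolding SA_def SB_def .
qed

lemma tendsto_in_probability_independent_sum:
  fixes X :: "real \<Rightarrow> 'a \<Rightarrow> 'b::euclidean_space"
  assumes M: "prob_space M" and X: "is_process M X" and sc: "stoch_continuous M X"
    and a: "a \<longlonglongrightarrow> a0" "\<And>j. a j \<ge> 0" "a0 \<ge> 0" and b: "b \<longlonglongrightarrow> b0" "\<And>j. b j \<ge> 0" "b0 \<ge> 0"
    and e: "e > 0"
  shows "(\<lambda>j. measure (M \<Otimes>\<^sub>M M) {p\<in>space (M \<Otimes>\<^sub>M M).
      dist (X (a j) (fst p) + X (b j) (snd p)) (X a0 (fst p) + X b0 (snd p)) > e}) \<longlonglongrightarrow> 0"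
proof (rule Lim_null_comparison[OF always_eventually tendsto_add_zero])
  have meas: "X s \<in> borel_measurable M" if "s \<ge> 0" for s using X that unfolding is_process_def by auto
  show "\<forall>j. norm (measure (M \<Otimes>\<^sub>M M) {p\<in>space (M \<Otimes>\<^sub>M M).
      dist (X (a j) (fst p) + X (b j) (snd p)) (X a0 (fst p) + X b0 (snd p)) > e})
      \<le> measure M {x\<in>space M. dist (X (a j) x) (X a0 x) > e / 2}
        + measure M {y\<in>space M. dist (X (b j) y) (X b0 y) > e / 2}"
    using measure_dist_independent_sum_le[OF M M meas[OF a(2)] meas[OF a(3)] meas[OF b(2)] meas[OF b(3)]]
    by simp
  show "(\<lambda>j. measure M {x\<in>space M. dist (X (a j) x) (X a0 x) > e / 2}) \<longlonglongrightarrow> 0"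
    by (rule stoch_continuous_tendsto_seq[OF sc]) (use a e in auto)
  show "(\<lambda>j. measure M {y\<in>space M. dist (X (b j) y) (X b0 y) > e / 2}) \<longlonglongrightarrow> 0"
    by (rule stoch_continuous_tendsto_seq[OF sc]) (use b e in auto)
qed

section \<open>The selfdecomposition of an \<open>\<alpha>\<close>-IDT process\<close>

lemma alpha_IDT_time_scale:
  assumes X: "is_process M X" and idt: "alpha_IDT \<alpha> M X" and d: "d \<ge> 0"
  shows "alpha_IDT \<alpha> M (\<lambda>t. X (d * t))"
  unfolding alpha_IDT_def
proof safe
  fix n :: nat assume "n \<ge> 1"
  then have law: "eq_law M (\<lambda>t. X (real n powr (1/\<alpha>) * t))
      (PiM {..<n} (\<lambda>_. M)) (\<lambda>t \<omega>. \<Sum>i<n. X t (\<omega> i))"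
    using idt unfolding alpha_IDT_def by auto
  have "is_process M (\<lambda>t. X (real n powr (1/\<alpha>) * t))" by (rule is_process_time_change[OF X]) simp
  then show "eq_law M (\<lambda>t. X (d * (real n powr (1/\<alpha>) * t)))
      (PiM {..<n} (\<lambda>_. M)) (\<lambda>t \<omega>. \<Sum>i<n. X (d * t) (\<omega> i))"
    using eq_law_time_change[OF _ is_process_iid_sum[OF X] law, of "\<lambda>t. d * t"] d
    by (simp add: ac_simps)
qed

lemma alpha_IDT_eq_law:
  assumes M: "prob_space M" and N: "prob_space N" and X: "is_process M X" and Y: "is_process N Y"
    and law: "eq_law M X N Y" and idt: "alpha_IDT \<alpha> M X"
  shows "alpha_IDT \<alpha> N Y"
  unfolding alpha_IDT_def
proof safe
  fix n :: nat assume n: "n \<ge> 1"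
  have "eq_law N (\<lambda>t. Y (real n powr (1/\<alpha>) * t)) M (\<lambda>t. X (real n powr (1/\<alpha>) * t))"
    by (rule eq_law_time_change[OF Y X eq_law_sym[OF law]]) auto
  also have "eq_law M (\<lambda>t. X (real n powr (1/\<alpha>) * t)) (PiM {..<n} (\<lambda>_. M)) (\<lambda>t \<omega>. \<Sum>i<n. X t (\<omega> i))"
    using idt n unfolding alpha_IDT_def by auto
  also have "eq_law (PiM {..<n} (\<lambda>_. M)) (\<lambda>t \<omega>. \<Sum>i<n. X t (\<omega> i)) (PiM {..<n} (\<lambda>_. N)) (\<lambda>t \<omega>. \<Sum>i<n. Y t (\<omega> i))"
    by (rule eq_law_iid_sum[OF M N X Y law n])
  finally show "eq_law N (\<lambda>t. Y (real n powr (1/\<alpha>) * t)) (PiM {..<n} (\<lambda>_. N)) (\<lambda>t \<omega>. \<Sum>i<n. Y t (\<omega> i))" .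
qed

lemma alpha_IDT_split_rational:
  assumes M: "prob_space M" and X: "is_process M X" and idt: "alpha_IDT \<alpha> M X"
    and m: "m \<ge> 1" and k: "k \<ge> 1"
  shows "eq_law M X (M \<Otimes>\<^sub>M M) (\<lambda>t (x, y).
      X ((real m / real (m + k)) powr (1/\<alpha>) * t) x + X ((real k / real (m + k)) powr (1/\<alpha>) * t) y)"
proof -
  define s where "s = 1 / real (m + k) powr (1/\<alpha>)"
  have s: "s > 0" using m by (simp add: s_def)
  have Xs: "is_process M (\<lambda>t. X (s * t))" using s by (intro is_process_time_change[OF X]) auto
  have idt_s: "eq_law M (\<lambda>t. X (s * (real n powr (1/\<alpha>) * t)))
      (PiM {..<n} (\<lambda>_. M)) (\<lambda>t \<omega>. \<Sum>i<n. X (s * t) (\<omega> i))" if "n \<ge> 1" for n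
    using alpha_IDT_time_scale[OF X idt, of s] s that unfolding alpha_IDT_def by auto
  have PM: "prob_space (PiM {..<j} (\<lambda>_. M))" for j using M by (auto intro: prob_space_PiM)
  have "eq_law M X (PiM {..<m + k} (\<lambda>_. M)) (\<lambda>t \<omega>. \<Sum>i<m + k. X (s * t) (\<omega> i))"
    using idt_s[of "m + k"] m by (simp add: s_def)
  also have "eq_law (PiM {..<m + k} (\<lambda>_. M)) (\<lambda>t \<omega>. \<Sum>i<m + k. X (s * t) (\<omega> i))
      (PiM {..<m} (\<lambda>_. M) \<Otimes>\<^sub>M PiM {..<k} (\<lambda>_. M))
      (\<lambda>t (x, y). (\<Sum>i<m. X (s * t) (x i)) + (\<Sum>i<k. X (s * t) (y i)))"
    by (rule eq_law_sym[OF eq_law_iid_sum_split[OF M Xs]])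
  also have "eq_law (PiM {..<m} (\<lambda>_. M) \<Otimes>\<^sub>M PiM {..<k} (\<lambda>_. M))
      (\<lambda>t (x, y). (\<Sum>i<m. X (s * t) (x i)) + (\<Sum>i<k. X (s * t) (y i)))
      (M \<Otimes>\<^sub>M M) (\<lambda>t (x, y). X (s * (real m powr (1/\<alpha>) * t)) x + X (s * (real k powr (1/\<alpha>) * t)) y)"
    using s by (intro eq_law_independent_sum PM M is_process_iid_sum Xs is_process_time_change[OF X]
        eq_law_sym[OF idt_s] m k) auto
  finally show ?thesis by (simp add: s_def powr_divide)
qed

lemma nat_fraction_approx:
  fixes A :: real
  assumes A: "0 < A" "A < 1"
  obtains m k :: "nat \<Rightarrow> nat"
  where "\<And>j. m j \<ge> 1" "\<And>j. k j \<ge> 1" "(\<lambda>j. real (m j) / real (m j + k j)) \<longlonglongrightarrow> A"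
proof -
  define N :: nat where "N = nat \<lceil>1 / A\<rceil> + 1"
  define n :: "nat \<Rightarrow> nat" where "n j = j + N" for j
  define m :: "nat \<Rightarrow> nat" where "m j = nat \<lfloor>real (n j) * A\<rfloor>" for j
  have n_pos: "real (n j) > 0" for j unfolding n_def N_def by simp
  have nA: "real (n j) * A \<ge> 1" for j
  proof -
    have "1 / A \<le> real (n j)" unfolding n_def N_def by linarith
    then show ?thesis using A by (simp add: field_simps)
  qed
  have m_lower: "real (n j) * A - 1 < real (m j)" and m_upper: "real (m j) \<le> real (n j) * A" for j
    unfolding m_def using nA[of j] by linarith+
  have m_less: "m j < n j" for j
  proof -
    have "real (n j) * A < real (n j)" using A n_pos[of j] by simp
    then have "real (m j) < real (n j)" using m_upper[of j] by linarith
    then show ?thesis by simp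
  qed
  have "(\<lambda>j. real (m j) / real (n j)) \<longlonglongrightarrow> A"
  proof (rule tendsto_sandwich[where f="\<lambda>j. A - 1 / real (n j)" and h="\<lambda>j. A"])
    have "A - 1 / real (n j) \<le> real (m j) / real (n j)" for j
    proof -
      have "(real (n j) * A - 1) / real (n j) \<le> real (m j) / real (n j)"
        using m_lower[of j] n_pos[of j] by (intro divide_right_mono) auto
      then show ?thesis using n_pos[of j] by (simp add: diff_divide_distrib)
    qed
    then show "\<forall>\<^sub>F j in sequentially. A - 1 / real (n j) \<le> real (m j) / real (n j)"
      by (intro always_eventually) auto
    have "real (m j) / real (n j) \<le> A" for j
      using m_upper[of j] n_pos[of j] by (simp add: divide_le_eq mult.commute)
    then show "\<forall>\<^sub>F j in sequentially. real (m j) / real (n j) \<le> A"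
      by (intro always_eventually) auto
    have "(\<lambda>j. 1 / real (n j)) \<longlonglongrightarrow> 0"
      unfolding n_def using LIMSEQ_ignore_initial_segment[OF lim_inverse_n', of N] by simp
    then show "(\<lambda>j. A - 1 / real (n j)) \<longlonglongrightarrow> A"
      using tendsto_diff[OF tendsto_const] by fastforce
  qed simp
  moreover have "m j \<ge> 1" "n j - m j \<ge> 1" "m j + (n j - m j) = n j" for j
    using nA[of j] m_less[of j] unfolding m_def by (simp_all add: le_nat_floor)
  ultimately show thesis
    by (intro that[of m "\<lambda>j. n j - m j"]) simp_all
qed

lemma alpha_IDT_split:
  fixes X :: "real \<Rightarrow> 'a \<Rightarrow> 'b::euclidean_space"
  assumes \<alpha>: "\<alpha> > 0" and M: "prob_space M" and X: "is_process M X" and idt: "alpha_IDT \<alpha> M X"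
    and sc: "stoch_continuous M X" and c: "0 < c" "c < 1"
  shows "eq_law M X (M \<Otimes>\<^sub>M M) (\<lambda>t (x, y). X (c * t) x + X ((1 - c powr \<alpha>) powr (1/\<alpha>) * t) y)"
proof -
  define d where "d = (1 - c powr \<alpha>) powr (1/\<alpha>)"
  have A: "0 < c powr \<alpha>" "c powr \<alpha> < 1" using c \<alpha> powr_less_mono2[of \<alpha> c 1] by auto
  obtain m k :: "nat \<Rightarrow> nat" where mk: "\<And>j. m j \<ge> 1" "\<And>j. k j \<ge> 1"
    and q: "(\<lambda>j. real (m j) / real (m j + k j)) \<longlonglongrightarrow> c powr \<alpha>"
    using nat_fraction_approx[OF A] by blast
  define cs where "cs j = (real (m j) / real (m j + k j)) powr (1/\<alpha>)" for j
  define ds where "ds j = (real (k j) / real (m j + k j)) powr (1/\<alpha>)" for j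
  have k_frac: "real (k j) / real (m j + k j) = 1 - real (m j) / real (m j + k j)" for j
  proof -
    have "real (m j + k j) > 0" using mk(1)[of j] by simp
    then show ?thesis by (simp add: field_simps)
  qed
  have q': "(\<lambda>j. real (k j) / real (m j + k j)) \<longlonglongrightarrow> 1 - c powr \<alpha>"
    unfolding k_frac by (rule tendsto_diff[OF tendsto_const q])
  have cs: "cs \<longlonglongrightarrow> c" and ds: "ds \<longlonglongrightarrow> d"
    using tendsto_powr[OF q tendsto_const, of "1/\<alpha>"] tendsto_powr[OF q' tendsto_const, of "1/\<alpha>"] A c \<alpha>
    by (simp_all add: cs_def[abs_def] ds_def[abs_def] d_def powr_powr)
  have pos: "cs j \<ge> 0" "ds j \<ge> 0" "d \<ge> 0" for j by (simp_all add: cs_def ds_def d_def)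
  have "eq_law M X (M \<Otimes>\<^sub>M M) (\<lambda>t (x, y). X (c * t) x + X (d * t) y)"
  proof (rule eq_law_tendsto_in_probability)
    show "eq_law M X (M \<Otimes>\<^sub>M M) (\<lambda>t (x, y). X (cs j * t) x + X (ds j * t) y)" for j
      unfolding cs_def ds_def by (rule alpha_IDT_split_rational[OF M X idt mk])
    show "(\<lambda>j. measure (M \<Otimes>\<^sub>M M) {\<omega>\<in>space (M \<Otimes>\<^sub>M M).
        dist ((\<lambda>t (x, y). X (cs j * t) x + X (ds j * t) y) t \<omega>)
          ((\<lambda>t (x, y). X (c * t) x + X (d * t) y) t \<omega>) > e}) \<longlonglongrightarrow> 0" if "t \<ge> 0" "e > 0" for t e
      using tendsto_in_probability_independent_sum[OF M X sc tendsto_mult_right[OF cs]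
          _ _ tendsto_mult_right[OF ds], of t] pos c that
      by (simp add: case_prod_beta')
  next
    show "prob_space (M \<Otimes>\<^sub>M M)" by (rule prob_space_pair[OF M M])
    show "is_process (M \<Otimes>\<^sub>M M) (\<lambda>t (x, y). X (c * t) x + X (d * t) y)"
      by (rule is_process_independent_sum; rule is_process_time_change[OF X]) (use c pos in auto)
    show "is_process (M \<Otimes>\<^sub>M M) (\<lambda>t (x, y). X (cs j * t) x + X (ds j * t) y)" for j
      by (rule is_process_independent_sum; rule is_process_time_change[OF X]) (use pos in auto)
  qed
  then show ?thesis unfolding d_def .
qed

section \<open>Residuals and iteration\<close>

definition path_law :: "'a measure \<Rightarrow> (real \<Rightarrow> 'a \<Rightarrow> 'b::euclidean_space) \<Rightarrow> (real \<Rightarrow> 'b) measure" where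
  "path_law M X = distr M paths (\<lambda>\<omega>. \<lambda>t\<in>{0..}. X t \<omega>)"

lemma sets_path_law [simp]: "sets (path_law M X) = sets paths"
  unfolding path_law_def by simp

lemma measurable_path_law:
  "is_process M X \<Longrightarrow> (\<lambda>\<omega>. \<lambda>t\<in>{0..}. X t \<omega>) \<in> measurable M paths"
  unfolding paths_def by (rule measurable_restrict_process) auto

lemma prob_space_path_law: "prob_space M \<Longrightarrow> is_process M X \<Longrightarrow> prob_space (path_law M X)"
  unfolding path_law_def by (rule prob_space.prob_space_distr[OF _ measurable_path_law])

lemma is_process_coordinates:
  assumes "sets Q = sets (paths :: (real \<Rightarrow> 'b::euclidean_space) measure)"
  shows "is_process Q (\<lambda>t u. u t :: 'b)"
  unfolding is_process_def measurable_cong_sets[OF assms refl]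
  by (auto simp: paths_def intro!: measurable_component_singleton)

lemma eq_law_path_law:
  assumes "is_process M X"
  shows "eq_law M X (path_law M X) (\<lambda>t u. u t)"
proof (rule eq_law_measure_preserving)
  show "(\<lambda>\<omega>. \<lambda>t\<in>{0..}. X t \<omega>) \<in> measurable M (path_law M X)"
    using measurable_path_law[OF assms] by (subst measurable_cong_sets[OF refl sets_path_law])
  show "distr M (path_law M X) (\<lambda>\<omega>. \<lambda>t\<in>{0..}. X t \<omega>) = path_law M X"
    unfolding path_law_def by (rule distr_cong) simp_all
qed (auto simp: is_process_coordinates)

definition continuous_alpha_IDT :: "real \<Rightarrow> 'a measure \<Rightarrow> (real \<Rightarrow> 'a \<Rightarrow> 'b::euclidean_space) \<Rightarrow> bool" where
  "continuous_alpha_IDT \<alpha> M X \<longleftrightarrow>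
     prob_space M \<and> is_process M X \<and> stoch_continuous M X \<and> alpha_IDT \<alpha> M X"

lemma continuous_alpha_IDT_time_scale:
  "continuous_alpha_IDT \<alpha> M X \<Longrightarrow> d \<ge> 0 \<Longrightarrow> continuous_alpha_IDT \<alpha> M (\<lambda>t. X (d * t))"
  unfolding continuous_alpha_IDT_def
  by (auto intro: is_process_time_change stoch_continuous_time_scale alpha_IDT_time_scale)

lemma continuous_alpha_IDT_path_law:
  assumes "continuous_alpha_IDT \<alpha> M X"
  shows "continuous_alpha_IDT \<alpha> (path_law M X) (\<lambda>t u. u t)"
proof -
  have M: "prob_space M" and X: "is_process M X" and sc: "stoch_continuous M X"
    and idt: "alpha_IDT \<alpha> M X"
    using assms unfolding continuous_alpha_IDT_def by auto
  have Q: "prob_space (path_law M X)" by (rule prob_space_path_law[OF M X])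
  have U: "is_process (path_law M X) (\<lambda>t u. u t)" by (rule is_process_coordinates) simp
  have law: "eq_law M X (path_law M X) (\<lambda>t u. u t)" by (rule eq_law_path_law[OF X])
  show ?thesis
    unfolding continuous_alpha_IDT_def
    using Q U stoch_continuous_eq_law[OF X U law sc] alpha_IDT_eq_law[OF M Q X U law idt] by simp
qed

lemma TSD_residual_continuous_alpha_IDT:
  assumes \<alpha>: "\<alpha> > 0" and X: "continuous_alpha_IDT \<alpha> M X" and c: "c \<in> {0<..<1}"
  defines "d \<equiv> (1 - c powr \<alpha>) powr (1/\<alpha>)"
  shows "TSD_residual c M X (path_law M (\<lambda>t. X (d * t)))"
proof -
  have M: "prob_space M" and Xp: "is_process M X" using X by (auto simp: continuous_alpha_IDT_def)
  have d: "d \<ge> 0" unfolding d_def by simp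
  have Xd: "continuous_alpha_IDT \<alpha> M (\<lambda>t. X (d * t))"
    by (rule continuous_alpha_IDT_time_scale[OF X]) (simp add: d_def)
  then have Q: "prob_space (path_law M (\<lambda>t. X (d * t)))"
    by (simp add: continuous_alpha_IDT_def prob_space_path_law)
  have "eq_law M X (M \<Otimes>\<^sub>M M) (\<lambda>t (x, y). X (c * t) x + X (d * t) y)"
    using X c unfolding continuous_alpha_IDT_def d_def by (intro alpha_IDT_split[OF \<alpha>]) auto
  also have "eq_law (M \<Otimes>\<^sub>M M) (\<lambda>t (x, y). X (c * t) x + X (d * t) y)
      (M \<Otimes>\<^sub>M path_law M (\<lambda>t. X (d * t))) (\<lambda>t (x, u). X (c * t) x + u t)"
    using Xd c d M Q
    by (intro eq_law_independent_sum eq_law_refl eq_law_path_law is_process_time_change[OF Xp]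
        is_process_coordinates) (auto simp: continuous_alpha_IDT_def)
  finally show ?thesis
    unfolding TSD_residual_def using Q by simp
qed

lemma tsd_paths_continuous_alpha_IDT:
  assumes \<alpha>: "\<alpha> > 0" and "continuous_alpha_IDT \<alpha> Q (\<lambda>t u. u t)"
  shows "tsd_paths n Q"
  using assms(2)
proof (induction n arbitrary: Q)
  case (Suc n)
  have "\<exists>R. TSD_residual c Q (\<lambda>t u. u t) R \<and> tsd_paths n R" if "c \<in> {0<..<1}" for c
    using TSD_residual_continuous_alpha_IDT[OF \<alpha> Suc.prems that]
      Suc.IH[OF continuous_alpha_IDT_path_law[OF continuous_alpha_IDT_time_scale[OF Suc.prems]]]
    by auto
  then show ?case by simp
qed simp

theorem mainTheorem6:
  fixes \<alpha> :: real and M :: "'a measure" and X :: "real \<Rightarrow> 'a \<Rightarrow> 'b::euclidean_space"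
  assumes "\<alpha> > 0"
    and "prob_space M"
    and "is_process M X"
    and "stoch_continuous M X"
    and "alpha_IDT \<alpha> M X"
  shows "TSD_infinite_order M X"
  unfolding TSD_infinite_order_def TSD_order_def
proof (intro allI impI conjI ballI)
  fix m :: nat and c :: real assume c: "c \<in> {0<..<1}"
  have X: "continuous_alpha_IDT \<alpha> M X"
    using assms unfolding continuous_alpha_IDT_def by simp
  define Q where "Q = path_law M (\<lambda>t. X ((1 - c powr \<alpha>) powr (1/\<alpha>) * t))"
  have "TSD_residual c M X Q"
    unfolding Q_def by (rule TSD_residual_continuous_alpha_IDT[OF assms(1) X c])
  moreover have "tsd_paths (m - 1) Q"
    unfolding Q_def using X
    by (intro tsd_paths_continuous_alpha_IDT[OF assms(1)] continuous_alpha_IDT_path_law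
        continuous_alpha_IDT_time_scale) auto
  ultimately show "\<exists>Q. TSD_residual c M X Q \<and> tsd_paths (m - 1) Q" by blast
qed

end
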